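(* Let $\mathcal N$ be a null structure on an oriented three-dimensional (pseudo-)Riemannian manifold $(\mathcal M,g)$ which at every point is a principal null structure of $\Phi_{ab}$ of multiplicity exactly $3$. Suppose that for a generator $k^a$ of $\mathcal N$, $$k^a\left(A_{abc}-2g_{a[b}\nabla_{c]}S\right)=0,\qquad k^ak^bA_{abc}=0,\qquad k^a\nabla_aS=0.$$ Then $\mathcal N$ is co-geodetic.
   Context: Abstract index notation; $\nabla$ the Levi-Civita connection; brackets denote (skew-)symmetrisation with weight $1/2$. $R_{abd}{}^cV^d=2\nabla_{[a}\nabla_{b]}V^c$, $R_{ab}=R_{acb}{}^c$, $R=R_a{}^a$, $\Phi_{ab}=R_{ab}-\frac13Rg_{ab}$, $S=\frac1{12}R$, Cotton tensor $A_{abc}=-2\nabla_{[b}\Phi_{c]a}+2g_{a[b}\nabla_{c]}S$. $g,\nabla$ extended complex-(bi)linearly to $T^{\mathbb C}\mathcal M$. A null structure is a complex line subbundle $\mathcal N\subset T^{\mathbb C}\mathcal M$ with $g(k,k)=0$ for all sections; a generator is a nowhere-vanishing section; $\mathcal N^\perp$ its orthogonal complement. $\mathcal N$ is co-geodetic if $g(\nabla_XY,Z)=0$ for all sections $X,Y$ of $\mathcal N^\perp$, $Z$ of $\mathcal N$. Multiplicity: pick a frame $(k,\ell,n)$ with $g(k,\ell)=1$, $g(n,n)=-\frac12$, other pairings zero; $\Phi_0=\frac12\Phi_{ab}k^ak^b$, $\Phi_1=\frac12\Phi_{ab}k^an^b$, $\Phi_2=\frac12\Phi_{ab}k^a\ell^b$,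 $\Phi_3=\frac12\Phi_{ab}\ell^an^b$, $\Phi_4=\frac12\Phi_{ab}\ell^a\ell^b$; the multiplicity of $\mathcal N$ is the multiplicity of the root $z=0$ of $\Phi_0+4\Phi_1z+6\Phi_2z^2+4\Phi_3z^3+\Phi_4z^4$. Multiplicity exactly 3 means $\Phi_0=\Phi_1=\Phi_2=0\neq\Phi_3$ (equivalently $\Phi_{ab}k^b=0$ but $k_{[a}\Phi_{b]c}\neq0$). *)

theory Defs
  imports "HOL-Analysis.Analysis"
begin

text \<open>Local coordinate description of a (pseudo-)Riemannian 3-manifold:
  an open set U of real^3 (a coordinate chart), metric components g x a b.
  Abstract indices become coordinate indices of type 3.\<close>

type_synonym pt = "real^3"

definition pd :: "3 \<Rightarrow> (pt \<Rightarrow> 'b::real_normed_vector) \<Rightarrow> pt \<Rightarrow> 'b" where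
  "pd i f x = frechet_derivative f (at x) (axis i 1)"

primrec Ck_on :: "nat \<Rightarrow> pt set \<Rightarrow> (pt \<Rightarrow> 'b::real_normed_vector) \<Rightarrow> bool" where
  "Ck_on 0 U f = continuous_on U f"
| "Ck_on (Suc k) U f = (f differentiable_on U \<and> (\<forall>i. Ck_on k U (pd i f)))"

definition smooth_on :: "pt set \<Rightarrow> (pt \<Rightarrow> 'b::real_normed_vector) \<Rightarrow> bool" where
  "smooth_on U f = (\<forall>k. Ck_on k U f)"

definition smooth_field :: "pt set \<Rightarrow> (pt \<Rightarrow> 3 \<Rightarrow> 'b::real_normed_vector) \<Rightarrow> bool" where
  "smooth_field U X = (\<forall>i. smooth_on U (\<lambda>x. X x i))"

type_synonym metric = "pt \<Rightarrow> 3 \<Rightarrow> 3 \<Rightarrow> real"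

definition pseudo_riemannian :: "pt set \<Rightarrow> metric \<Rightarrow> bool" where
  "pseudo_riemannian U g \<longleftrightarrow> open U \<and>
     (\<forall>a b. smooth_on U (\<lambda>x. g x a b)) \<and>
     (\<forall>x\<in>U. \<forall>a b. g x a b = g x b a) \<and>
     (\<forall>x\<in>U. det (\<chi> i j. g x i j) \<noteq> 0)"

definition ginv :: "metric \<Rightarrow> pt \<Rightarrow> 3 \<Rightarrow> 3 \<Rightarrow> real" where
  "ginv g x a b = matrix_inv (\<chi> i j. g x i j) $ a $ b"

definition Gam :: "metric \<Rightarrow> pt \<Rightarrow> 3 \<Rightarrow> 3 \<Rightarrow> 3 \<Rightarrow> real" where
  "Gam g x c a b = (\<Sum>d\<in>UNIV. ginv g x c d *
      (pd a (\<lambda>y. g y d b) x + pd b (\<lambda>y. g y d a) x - pd d (\<lambda>y. g y a b) x)) / 2"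

text \<open>Riemann tensor R_{abd}^c with R_{abd}^c V^d = 2 nabla_[a nabla_b] V^c\<close>
definition Riem :: "metric \<Rightarrow> pt \<Rightarrow> 3 \<Rightarrow> 3 \<Rightarrow> 3 \<Rightarrow> 3 \<Rightarrow> real" where
  "Riem g x a b d c = pd a (\<lambda>y. Gam g y c b d) x - pd b (\<lambda>y. Gam g y c a d) x
     + (\<Sum>e\<in>UNIV. Gam g x c a e * Gam g x e b d - Gam g x c b e * Gam g x e a d)"

definition Ric :: "metric \<Rightarrow> pt \<Rightarrow> 3 \<Rightarrow> 3 \<Rightarrow> real" where
  "Ric g x a b = (\<Sum>c\<in>UNIV. Riem g x a c b c)"

definition Scal :: "metric \<Rightarrow> pt \<Rightarrow> real" where
  "Scal g x = (\<Sum>a\<in>UNIV. \<Sum>b\<in>UNIV. ginv g x a b * Ric g x a b)"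

definition Phi :: "metric \<Rightarrow> pt \<Rightarrow> 3 \<Rightarrow> 3 \<Rightarrow> real" where
  "Phi g x a b = Ric g x a b - Scal g x / 3 * g x a b"

definition Sc :: "metric \<Rightarrow> pt \<Rightarrow> real" where
  "Sc g x = Scal g x / 12"

definition nabla2 :: "metric \<Rightarrow> (pt \<Rightarrow> 3 \<Rightarrow> 3 \<Rightarrow> real) \<Rightarrow> pt \<Rightarrow> 3 \<Rightarrow> 3 \<Rightarrow> 3 \<Rightarrow> real" where
  "nabla2 g T x a b c = pd a (\<lambda>y. T y b c) x
     - (\<Sum>e\<in>UNIV. Gam g x e a b * T x e c) - (\<Sum>e\<in>UNIV. Gam g x e a c * T x b e)"

definition Cotton :: "metric \<Rightarrow> pt \<Rightarrow> 3 \<Rightarrow> 3 \<Rightarrow> 3 \<Rightarrow> real" where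
  "Cotton g x a b c =
     - (nabla2 g (Phi g) x b c a - nabla2 g (Phi g) x c b a)
     + (g x a b * pd c (Sc g) x - g x a c * pd b (Sc g) x)"

definition gC :: "metric \<Rightarrow> pt \<Rightarrow> (3 \<Rightarrow> complex) \<Rightarrow> (3 \<Rightarrow> complex) \<Rightarrow> complex" where
  "gC g x u v = (\<Sum>a\<in>UNIV. \<Sum>b\<in>UNIV. of_real (g x a b) * u a * v b)"

definition PhiC :: "metric \<Rightarrow> pt \<Rightarrow> (3 \<Rightarrow> complex) \<Rightarrow> (3 \<Rightarrow> complex) \<Rightarrow> complex" where
  "PhiC g x u v = (\<Sum>a\<in>UNIV. \<Sum>b\<in>UNIV. of_real (Phi g x a b) * u a * v b)"

definition nablaC :: "metric \<Rightarrow> (pt \<Rightarrow> 3 \<Rightarrow> complex) \<Rightarrow> (pt \<Rightarrow> 3 \<Rightarrow> complex) \<Rightarrow> pt \<Rightarrow> 3 \<Rightarrow> complex" where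
  "nablaC g X Y x c = (\<Sum>a\<in>UNIV. X x a * pd a (\<lambda>y. Y y c) x)
     + (\<Sum>a\<in>UNIV. \<Sum>b\<in>UNIV. of_real (Gam g x c a b) * X x a * Y x b)"

text \<open>A null structure N: a complex line subbundle N x of the complexified tangent
  spaces, spanned by a smooth nowhere-vanishing null generator k.\<close>
definition generator :: "pt set \<Rightarrow> metric \<Rightarrow> (pt \<Rightarrow> (3 \<Rightarrow> complex) set) \<Rightarrow> (pt \<Rightarrow> 3 \<Rightarrow> complex) \<Rightarrow> bool" where
  "generator U g N k \<longleftrightarrow> smooth_field U k \<and>
     (\<forall>x\<in>U. (\<exists>i. k x i \<noteq> 0) \<and> gC g x (k x) (k x) = 0 \<and> N x = {(\<lambda>i. c * k x i) | c. True})"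

definition perp :: "metric \<Rightarrow> (pt \<Rightarrow> (3 \<Rightarrow> complex) set) \<Rightarrow> pt \<Rightarrow> (3 \<Rightarrow> complex) set" where
  "perp g N x = {v. \<forall>w\<in>N x. gC g x v w = 0}"

definition co_geodetic :: "pt set \<Rightarrow> metric \<Rightarrow> (pt \<Rightarrow> (3 \<Rightarrow> complex) set) \<Rightarrow> bool" where
  "co_geodetic U g N \<longleftrightarrow>
     (\<forall>X Y Z. smooth_field U X \<and> smooth_field U Y \<and> smooth_field U Z \<and>
        (\<forall>x\<in>U. X x \<in> perp g N x \<and> Y x \<in> perp g N x \<and> Z x \<in> N x) \<longrightarrow>
        (\<forall>x\<in>U. gC g x (nablaC g X Y x) (Z x) = 0))"

text \<open>Multiplicity exactly 3 of the null direction k at x as a principal null direction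
  of Phi: in a frame (k, l, n) with g(k,l)=1, g(n,n)=-1/2, other pairings zero,
  Phi_0 = Phi_1 = Phi_2 = 0 and Phi_3 \<noteq> 0.\<close>
definition null_frame :: "metric \<Rightarrow> pt \<Rightarrow> (3 \<Rightarrow> complex) \<Rightarrow> (3 \<Rightarrow> complex) \<Rightarrow> (3 \<Rightarrow> complex) \<Rightarrow> bool" where
  "null_frame g x k l n \<longleftrightarrow> gC g x k l = 1 \<and> gC g x n n = -1/2 \<and>
     gC g x k k = 0 \<and> gC g x l l = 0 \<and> gC g x k n = 0 \<and> gC g x l n = 0"

definition mult3 :: "metric \<Rightarrow> pt \<Rightarrow> (3 \<Rightarrow> complex) \<Rightarrow> bool" where
  "mult3 g x k \<longleftrightarrow> (\<exists>l n. null_frame g x k l n \<and>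
     PhiC g x k k / 2 = 0 \<and> PhiC g x k n / 2 = 0 \<and> PhiC g x k l / 2 = 0 \<and>
     PhiC g x l n / 2 \<noteq> 0)"

end

theory Submission
  imports Defs
begin

text \<open>Multiplicity at least 3 means \<open>\<Phi>(k, -) = 0\<close>. Differentiating this identity turns the
  Cotton condition \<open>k\<^sup>a \<nabla>\<^sub>[\<^sub>b \<Phi>\<^sub>c\<^sub>]\<^sub>a = 0\<close> into the symmetry of
  \<open>\<Phi>(u, \<nabla>\<^sub>v k)\<close> in \<open>u, v\<close>. As \<open>g(k, \<nabla>\<^sub>v k) = 0\<close>, in a null frame
  \<open>(k, l, n)\<close> one has \<open>\<Phi>(u, \<nabla>\<^sub>v k) = -2 g(\<nabla>\<^sub>v k, n) \<Phi>(u, n)\<close>; with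
  \<open>\<Phi>(n, n) = 0\<close> (trace-freeness) and \<open>\<Phi>(l, n) \<noteq> 0\<close> (multiplicity exactly 3), the symmetry
  evaluated at \<open>(l, k)\<close> and \<open>(l, n)\<close> gives \<open>g(\<nabla>\<^sub>k k, n) = g(\<nabla>\<^sub>n k, n) = 0\<close>.
  Hence \<open>g(Y, \<nabla>\<^sub>X k) = 0\<close> for \<open>X, Y \<in> k\<^sup>\<bottom> = span(k, n)\<close>, and metric
  compatibility gives \<open>g(\<nabla>\<^sub>X Y, k) = - g(Y, \<nabla>\<^sub>X k) = 0\<close>.\<close>

lemma sum_rotate3: "(\<Sum>a\<in>A. \<Sum>c\<in>C. \<Sum>e\<in>E. F a c e) = (\<Sum>e\<in>E. \<Sum>c\<in>C. \<Sum>a\<in>A. F a c e)"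
proof -
  have "(\<Sum>a\<in>A. \<Sum>c\<in>C. \<Sum>e\<in>E. F a c e) = (\<Sum>a\<in>A. \<Sum>e\<in>E. \<Sum>c\<in>C. F a c e)"
    by (rule sum.cong[OF refl], rule sum.swap)
  also have "\<dots> = (\<Sum>e\<in>E. \<Sum>a\<in>A. \<Sum>c\<in>C. F a c e)"
    by (rule sum.swap)
  also have "\<dots> = (\<Sum>e\<in>E. \<Sum>c\<in>C. \<Sum>a\<in>A. F a c e)"
    by (rule sum.cong[OF refl], rule sum.swap)
  finally show ?thesis .
qed

lemma sum_contract_swap:
  fixes P G :: "'i::finite \<Rightarrow> 'i \<Rightarrow> 'a::comm_semiring_1"
  shows "(\<Sum>a\<in>UNIV. \<Sum>c\<in>UNIV. (\<Sum>e\<in>UNIV. P e a * G e c) * Y a * K c)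
       = (\<Sum>a\<in>UNIV. \<Sum>c\<in>UNIV. G a c * (\<Sum>e\<in>UNIV. P a e * Y e) * K c)"
proof -
  have "(\<Sum>a\<in>UNIV. \<Sum>c\<in>UNIV. G a c * (\<Sum>e\<in>UNIV. P a e * Y e) * K c)
      = (\<Sum>a\<in>UNIV. \<Sum>c\<in>UNIV. \<Sum>e\<in>UNIV. G a c * P a e * Y e * K c)"
    by (simp add: sum_distrib_left sum_distrib_right mult.assoc)
  also have "\<dots> = (\<Sum>e\<in>UNIV. \<Sum>c\<in>UNIV. \<Sum>a\<in>UNIV. G a c * P a e * Y e * K c)"
    by (rule sum_rotate3)
  finally show ?thesis
    by (simp add: sum_distrib_left sum_distrib_right mult_ac)
qed

lemma sum_contract_swap_sym:
  fixes P G :: "'i::finite \<Rightarrow> 'i \<Rightarrow> 'a::comm_semiring_1"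
  assumes "\<And>a b. G a b = G b a"
  shows "(\<Sum>a\<in>UNIV. \<Sum>c\<in>UNIV. (\<Sum>e\<in>UNIV. P e c * G e a) * Y a * K c)
       = (\<Sum>a\<in>UNIV. \<Sum>c\<in>UNIV. G a c * Y a * (\<Sum>e\<in>UNIV. P c e * K e))"
  using sum_contract_swap[of P G K Y] by (subst (1 2) sum.swap) (simp add: assms mult_ac)

lemma trace_product_swap:
  fixes M A B :: "'i::finite \<Rightarrow> 'i \<Rightarrow> 'a::comm_semiring_1"
  shows "(\<Sum>c\<in>UNIV. \<Sum>d\<in>UNIV. (\<Sum>e\<in>UNIV. \<Sum>f\<in>UNIV. M c f * A f e * M e d) * B d c)
       = (\<Sum>c\<in>UNIV. \<Sum>d\<in>UNIV. (\<Sum>e\<in>UNIV. \<Sum>f\<in>UNIV. M c f * B f e * M e d) * A d c)"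
proof -
  have "(\<Sum>c\<in>UNIV. \<Sum>d\<in>UNIV. (\<Sum>e\<in>UNIV. \<Sum>f\<in>UNIV. M c f * A f e * M e d) * B d c)
      = (\<Sum>c\<in>UNIV. \<Sum>d\<in>UNIV. \<Sum>e\<in>UNIV. \<Sum>f\<in>UNIV. M c f * A f e * M e d * B d c)"
    by (simp add: sum_distrib_right)
  also have "\<dots> = (\<Sum>(c,d,e,f)\<in>UNIV. M c f * A f e * M e d * B d c)"
    by (simp add: sum.cartesian_product UNIV_Times_UNIV[symmetric] del: UNIV_Times_UNIV)
  also have "\<dots> = (\<Sum>(c,d,e,f)\<in>UNIV. M c f * B f e * M e d * A d c)"
    by (rule sum.reindex_bij_witness[where i = "\<lambda>(c,d,e,f). (e,f,c,d)"
          and j = "\<lambda>(c,d,e,f). (e,f,c,d)"])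
      (auto simp: mult_ac)
  also have "\<dots> = (\<Sum>c\<in>UNIV. \<Sum>d\<in>UNIV. \<Sum>e\<in>UNIV. \<Sum>f\<in>UNIV. M c f * B f e * M e d * A d c)"
    by (simp add: sum.cartesian_product UNIV_Times_UNIV[symmetric] del: UNIV_Times_UNIV)
  also have "\<dots> = (\<Sum>c\<in>UNIV. \<Sum>d\<in>UNIV. (\<Sum>e\<in>UNIV. \<Sum>f\<in>UNIV. M c f * B f e * M e d) * A d c)"
    by (simp add: sum_distrib_right)
  finally show ?thesis .
qed

definition bil :: "('i \<Rightarrow> 'i \<Rightarrow> 'a::comm_semiring_1) \<Rightarrow> ('i \<Rightarrow> 'a) \<Rightarrow> ('i \<Rightarrow> 'a) \<Rightarrow> 'a" where
  "bil M u v = (\<Sum>a\<in>UNIV. \<Sum>b\<in>UNIV. M a b * u a * v b)"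

lemma gC_bil: "gC g x u v = bil (\<lambda>a b. of_real (g x a b)) u v"
  by (simp add: gC_def bil_def)

lemma PhiC_bil: "PhiC g x u v = bil (\<lambda>a b. of_real (Phi g x a b)) u v"
  by (simp add: PhiC_def bil_def)

lemma bil_linear_left:
  "bil M (\<lambda>i. a * u i + b * w i + c * z i) v = a * bil M u v + b * bil M w v + c * bil M z v"
  by (simp add: bil_def algebra_simps sum.distrib sum_distrib_left)

lemma bil_linear_right:
  "bil M v (\<lambda>i. a * u i + b * w i + c * z i) = a * bil M v u + b * bil M v w + c * bil M v z"
  by (simp add: bil_def algebra_simps sum.distrib sum_distrib_left)

lemma bil_scale_right: "bil M u (\<lambda>i. c * v i) = c * bil M u v"
  by (simp add: bil_def algebra_simps sum_distrib_left)

lemma bil_sym: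
  assumes "\<And>a b. M a b = M b a"
  shows "bil M u v = bil M v u"
  unfolding bil_def by (subst sum.swap) (simp add: assms mult_ac)

lemma gC_sym: "(\<And>a b. g x a b = g x b a) \<Longrightarrow> gC g x u v = gC g x v u"
  unfolding gC_bil by (rule bil_sym) simp

section \<open>Partial derivatives and smoothness\<close>

lemma pd_cong:
  assumes "open U" "x \<in> U" "\<And>y. y \<in> U \<Longrightarrow> f y = h y"
  shows "pd i f x = pd i h x"
proof -
  have "(f has_derivative D) (at x) \<longleftrightarrow> (h has_derivative D) (at x)" for D
    using has_derivative_transform_within_open[of f D x UNIV U h]
      has_derivative_transform_within_open[of h D x UNIV U f] assms by auto
  then show ?thesis unfolding pd_def frechet_derivative_def by simp
qed

lemma pd_eq_0:
  assumes "open U" "x \<in> U" "\<And>y. y \<in> U \<Longrightarrow> f y = 0"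
  shows "pd i f x = 0"
  using pd_cong[OF assms(1,2), of f "\<lambda>y. 0"] assms(3) by (simp add: pd_def)

lemma pd_eqI:
  assumes "(f has_derivative D) (at x)"
  shows "pd i f x = D (axis i 1)"
  using frechet_derivative_at[OF assms] unfolding pd_def by simp

lemma pd_const [simp]: "pd i (\<lambda>y. c) = (\<lambda>y. 0)"
  by (rule ext) (simp add: pd_def)

lemma pd_add:
  assumes "f differentiable (at x)" "h differentiable (at x)"
  shows "pd i (\<lambda>y. f y + h y) x = pd i f x + pd i h x"
  using pd_eqI[OF has_derivative_add[OF assms[unfolded frechet_derivative_works]]] by (simp add: pd_def)

lemma pd_minus:
  assumes "f differentiable (at x)"
  shows "pd i (\<lambda>y. - f y) x = - pd i f x"
  using pd_eqI[OF has_derivative_minus[OF assms[unfolded frechet_derivative_works]]] by (simp add: pd_def)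

lemma pd_mult:
  fixes f h :: "pt \<Rightarrow> 'a::real_normed_algebra"
  assumes "f differentiable (at x)" "h differentiable (at x)"
  shows "pd i (\<lambda>y. f y * h y) x = f x * pd i h x + pd i f x * h x"
  using pd_eqI[OF has_derivative_mult[OF assms[unfolded frechet_derivative_works]]] by (simp add: pd_def)

lemma pd_sum:
  assumes "\<And>j. j \<in> J \<Longrightarrow> f j differentiable (at x)"
  shows "pd i (\<lambda>y. \<Sum>j\<in>J. f j y) x = (\<Sum>j\<in>J. pd i (f j) x)"
  using pd_eqI[OF has_derivative_sum[OF assms[unfolded frechet_derivative_works]]] by (simp add: pd_def)

lemma pd_divide_const:
  fixes f :: "pt \<Rightarrow> real"
  assumes "f differentiable (at x)"
  shows "pd i (\<lambda>y. f y / c) x = pd i f x / c"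
  using pd_mult[OF assms, of "\<lambda>y. inverse c"] by (simp add: divide_inverse)

lemma pd_of_real:
  assumes "f differentiable (at x)"
  shows "pd i (\<lambda>y. of_real (f y) :: 'a::real_normed_algebra_1) x = of_real (pd i f x)"
  using pd_eqI[OF has_derivative_of_real[OF assms[unfolded frechet_derivative_works]]] by (simp add: pd_def)

lemma pd_inverse:
  fixes f :: "pt \<Rightarrow> real"
  assumes "f differentiable (at x)" "f x \<noteq> 0"
  shows "pd i (\<lambda>y. inverse (f y)) x = - (inverse (f x) * pd i f x * inverse (f x))"
  using pd_eqI[OF Deriv.has_derivative_inverse[OF assms(2) assms(1)[unfolded frechet_derivative_works]]]
  by (simp add: pd_def)

lemma differentiable_of_real:
  "f differentiable (at x) \<Longrightarrow> (\<lambda>y. complex_of_real (f y)) differentiable (at x)"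
  unfolding differentiable_def by (blast intro: has_derivative_of_real)

lemma differentiable_on_transform:
  assumes "\<And>y. y \<in> U \<Longrightarrow> f y = h y" "f differentiable_on U"
  shows "h differentiable_on U"
  unfolding differentiable_on_def
proof
  fix x assume "x \<in> U"
  then show "h differentiable (at x within U)"
    using assms differentiable_transform_within[of f x U 1 h] by (auto simp: differentiable_on_def)
qed

lemma Ck_cong:
  assumes "open U" "\<And>y. y \<in> U \<Longrightarrow> f y = h y" "Ck_on k U f"
  shows "Ck_on k U h"
  using assms(2,3)
proof (induction k arbitrary: f h)
  case 0
  then show ?case using continuous_on_cong by force
next
  case (Suc k)
  have "h differentiable_on U"
    using Suc.prems differentiable_on_transform by auto
  moreover have "Ck_on k U (pd i h)" for i
    using Suc.IH[of "pd i f" "pd i h"] Suc.prems pd_cong[OF assms(1) _ Suc.prems(1)] by auto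
  ultimately show ?case by simp
qed

lemma Ck_SucI:
  assumes "open U" "f differentiable_on U" "\<And>i. Ck_on k U (h i)"
    and "\<And>i y. y \<in> U \<Longrightarrow> h i y = pd i f y"
  shows "Ck_on (Suc k) U f"
  using assms Ck_cong[of U "h i" "pd i f" k for i] by simp

lemma Ck_Suc_imp_Ck: "Ck_on (Suc k) U f \<Longrightarrow> Ck_on k U f"
  by (induction k arbitrary: f) (simp_all add: differentiable_imp_continuous_on)

lemma Ck_const: "Ck_on k U (\<lambda>y. c)"
  by (induction k arbitrary: c) auto

lemma Ck_add:
  assumes "open U"
  shows "Ck_on k U f \<Longrightarrow> Ck_on k U h \<Longrightarrow> Ck_on k U (\<lambda>y. f y + h y)"
proof (induction k arbitrary: f h)
  case 0
  then show ?case by (auto intro: continuous_on_add)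
next
  case (Suc k)
  show ?case
  proof (rule Ck_SucI[OF assms, where h = "\<lambda>i y. pd i f y + pd i h y"])
    fix i y assume y: "y \<in> U"
    have "f differentiable (at y)" "h differentiable (at y)"
      using Suc.prems y differentiable_on_eq_differentiable_at[OF assms] by auto
    then show "pd i f y + pd i h y = pd i (\<lambda>y. f y + h y) y" by (simp add: pd_add)
  qed (use Suc.prems Suc.IH in auto)
qed

lemma Ck_minus:
  assumes "open U"
  shows "Ck_on k U f \<Longrightarrow> Ck_on k U (\<lambda>y. - f y)"
proof (induction k arbitrary: f)
  case 0
  then show ?case by (auto intro: continuous_on_minus)
next
  case (Suc k)
  show ?case
  proof (rule Ck_SucI[OF assms, where h = "\<lambda>i y. - pd i f y"])
    fix i y assume y: "y \<in> U"
    have "f differentiable (at y)"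
      using Suc.prems y differentiable_on_eq_differentiable_at[OF assms] by auto
    then show "- pd i f y = pd i (\<lambda>y. - f y) y" by (simp add: pd_minus)
  qed (use Suc.prems Suc.IH in auto)
qed

lemma Ck_mult:
  fixes f h :: "pt \<Rightarrow> 'a::real_normed_algebra"
  assumes "open U"
  shows "Ck_on k U f \<Longrightarrow> Ck_on k U h \<Longrightarrow> Ck_on k U (\<lambda>y. f y * h y)"
proof (induction k arbitrary: f h)
  case 0
  then show ?case by (auto intro: continuous_on_mult)
next
  case (Suc k)
  show ?case
  proof (rule Ck_SucI[OF assms, where h = "\<lambda>i y. f y * pd i h y + pd i f y * h y"])
    fix i
    have "Ck_on k U f" "Ck_on k U h" "Ck_on k U (pd i f)" "Ck_on k U (pd i h)"
      using Suc.prems Ck_Suc_imp_Ck[OF Suc.prems(1)] Ck_Suc_imp_Ck[OF Suc.prems(2)] by simp_all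
    then show "Ck_on k U (\<lambda>y. f y * pd i h y + pd i f y * h y)"
      by (intro Ck_add[OF assms] Suc.IH)
    fix y assume y: "y \<in> U"
    have "f differentiable (at y)" "h differentiable (at y)"
      using Suc.prems y differentiable_on_eq_differentiable_at[OF assms] by auto
    then show "f y * pd i h y + pd i f y * h y = pd i (\<lambda>y. f y * h y) y" by (simp add: pd_mult)
  qed (use Suc.prems in \<open>simp add: differentiable_on_mult\<close>)
qed

lemma Ck_inverse:
  fixes f :: "pt \<Rightarrow> real"
  assumes "open U" "\<And>y. y \<in> U \<Longrightarrow> f y \<noteq> 0"
  shows "Ck_on k U f \<Longrightarrow> Ck_on k U (\<lambda>y. inverse (f y))"
proof (induction k)
  case 0
  then show ?case using assms by (auto intro!: continuous_on_inverse)
next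
  case (Suc k)
  show ?case
  proof (rule Ck_SucI[OF assms(1), where h = "\<lambda>i y. - (inverse (f y) * pd i f y * inverse (f y))"])
    fix i
    have "Ck_on k U (\<lambda>y. inverse (f y))" "Ck_on k U (pd i f)"
      using Suc Ck_Suc_imp_Ck[OF Suc.prems] by simp_all
    then show "Ck_on k U (\<lambda>y. - (inverse (f y) * pd i f y * inverse (f y)))"
      by (intro Ck_minus[OF assms(1)] Ck_mult[OF assms(1)])
    fix y assume y: "y \<in> U"
    have "f differentiable (at y)"
      using Suc.prems y differentiable_on_eq_differentiable_at[OF assms(1)] by auto
    then show "- (inverse (f y) * pd i f y * inverse (f y)) = pd i (\<lambda>y. inverse (f y)) y"
      using assms(2)[OF y] by (simp add: pd_inverse)
  qed (use Suc.prems assms(2) in \<open>auto intro!: differentiable_on_inverse\<close>)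
qed

lemma smooth_const: "smooth_on U (\<lambda>y. c)"
  by (simp add: smooth_on_def Ck_const)

lemma smooth_add: "open U \<Longrightarrow> smooth_on U f \<Longrightarrow> smooth_on U h \<Longrightarrow> smooth_on U (\<lambda>y. f y + h y)"
  by (simp add: smooth_on_def Ck_add)

lemma smooth_minus: "open U \<Longrightarrow> smooth_on U f \<Longrightarrow> smooth_on U (\<lambda>y. - f y)"
  by (simp add: smooth_on_def Ck_minus)

lemma smooth_diff: "open U \<Longrightarrow> smooth_on U f \<Longrightarrow> smooth_on U h \<Longrightarrow> smooth_on U (\<lambda>y. f y - h y)"
  using smooth_add[of U f "\<lambda>y. - h y"] smooth_minus[of U h] by simp

lemma smooth_mult:
  fixes f h :: "pt \<Rightarrow> 'a::real_normed_algebra"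
  shows "open U \<Longrightarrow> smooth_on U f \<Longrightarrow> smooth_on U h \<Longrightarrow> smooth_on U (\<lambda>y. f y * h y)"
  by (simp add: smooth_on_def Ck_mult)

lemma smooth_divide_const:
  "open U \<Longrightarrow> smooth_on U f \<Longrightarrow> smooth_on U (\<lambda>y. f y / (c :: real))"
  using smooth_mult[of U f "\<lambda>y. inverse c"] smooth_const[of U "inverse c"]
  by (simp add: divide_inverse)

lemma smooth_inverse:
  fixes f :: "pt \<Rightarrow> real"
  shows "open U \<Longrightarrow> (\<And>y. y \<in> U \<Longrightarrow> f y \<noteq> 0) \<Longrightarrow> smooth_on U f
    \<Longrightarrow> smooth_on U (\<lambda>y. inverse (f y))"
  by (simp add: smooth_on_def Ck_inverse)

lemma smooth_sum:
  assumes "open U" "finite J" "\<And>j. smooth_on U (f j)"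
  shows "smooth_on U (\<lambda>y. \<Sum>j\<in>J. f j y)"
  using assms(2) by induction (auto intro: smooth_const smooth_add assms(1,3))

lemma smooth_pd: "smooth_on U f \<Longrightarrow> smooth_on U (pd i f)"
  unfolding smooth_on_def by (metis Ck_on.simps(2))

lemma smooth_cong: "open U \<Longrightarrow> (\<And>y. y \<in> U \<Longrightarrow> f y = h y) \<Longrightarrow> smooth_on U f \<Longrightarrow> smooth_on U h"
  unfolding smooth_on_def using Ck_cong by blast

lemma smooth_imp_differentiable: "open U \<Longrightarrow> smooth_on U f \<Longrightarrow> x \<in> U \<Longrightarrow> f differentiable (at x)"
  unfolding smooth_on_def using differentiable_on_eq_differentiable_at by (metis Ck_on.simps(2))

section \<open>Symmetry of second partial derivatives\<close>

lemma has_real_derivative_along_axis: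
  fixes f :: "pt \<Rightarrow> real"
  assumes "f differentiable (at (p + t *\<^sub>R axis i 1))"
  shows "((\<lambda>s. f (p + s *\<^sub>R axis i 1)) has_real_derivative pd i f (p + t *\<^sub>R axis i 1)) (at t)"
proof -
  let ?q = "p + t *\<^sub>R axis i 1"
  have "((\<lambda>s. p + s *\<^sub>R axis i 1) has_derivative (\<lambda>s. s *\<^sub>R axis i 1)) (at t)"
    by (auto intro!: derivative_eq_intros)
  from diff_chain_at[OF this assms[unfolded frechet_derivative_works]]
  have "((\<lambda>s. f (p + s *\<^sub>R axis i 1)) has_derivative
      frechet_derivative f (at ?q) \<circ> (\<lambda>s. s *\<^sub>R axis i 1)) (at t)"
    by (simp add: o_def)
  moreover have "frechet_derivative f (at ?q) (s *\<^sub>R axis i 1) = pd i f ?q * s" for s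
    using linear_frechet_derivative[OF assms] by (simp add: pd_def linear_cmul)
  ultimately show ?thesis by (simp add: has_field_derivative_def o_def)
qed

lemma second_difference_mixed_pd:
  fixes f :: "pt \<Rightarrow> real"
  assumes U: "open U" and f: "Ck_on 2 U f" and h: "h > 0" and sub: "cball x (2*h) \<subseteq> U"
  shows "\<exists>p. dist p x \<le> 2*h \<and>
     f (x + h *\<^sub>R axis a 1 + h *\<^sub>R axis b 1) - f (x + h *\<^sub>R axis a 1)
       - f (x + h *\<^sub>R axis b 1) + f x = h\<^sup>2 * pd b (pd a f) p"
proof -
  define u where "u = axis a (1::real)"
  define v where "v = axis b (1::real)"
  have nu: "norm u = 1" "norm v = 1" by (simp_all add: u_def v_def)
  have inU: "x + s *\<^sub>R u + t *\<^sub>R v \<in> U" if "0 \<le> s" "s \<le> h" "0 \<le> t" "t \<le> h" for s t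
  proof -
    have "norm (s *\<^sub>R u + t *\<^sub>R v) \<le> norm (s *\<^sub>R u) + norm (t *\<^sub>R v)" by (rule norm_triangle_ineq)
    also have "\<dots> \<le> 2*h" using that nu by simp
    finally have "dist (x + s *\<^sub>R u + t *\<^sub>R v) x \<le> 2*h" by (simp add: dist_norm add.assoc)
    then show ?thesis using sub by (auto simp: dist_commute)
  qed
  have fd: "f differentiable (at y)" if "y \<in> U" for y
    using f that differentiable_on_eq_differentiable_at[OF U] by (auto simp add: numeral_2_eq_2)
  have fad: "pd a f differentiable (at y)" if "y \<in> U" for y
    using f that differentiable_on_eq_differentiable_at[OF U] by (auto simp add: numeral_2_eq_2)
  define \<phi> where "\<phi> s = f ((x + h *\<^sub>R v) + s *\<^sub>R u) - f (x + s *\<^sub>R u)" for s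
  have "\<exists>z. 0 < z \<and> z < h \<and>
      \<phi> h - \<phi> 0 = (h - 0) * (pd a f ((x + h *\<^sub>R v) + z *\<^sub>R u) - pd a f (x + z *\<^sub>R u))"
  proof (rule MVT2[OF h])
    fix s assume s: "0 \<le> s" "s \<le> h"
    have i1: "(x + h *\<^sub>R v) + s *\<^sub>R u \<in> U" using inU[OF s, of h] h by (simp add: ac_simps)
    have i2: "x + s *\<^sub>R u \<in> U" using inU[OF s, of 0] h by simp
    show "(\<phi> has_real_derivative
        pd a f ((x + h *\<^sub>R v) + s *\<^sub>R u) - pd a f (x + s *\<^sub>R u)) (at s)"
      unfolding \<phi>_def u_def
      by (intro DERIV_diff has_real_derivative_along_axis) (use fd i1 i2 in \<open>auto simp: u_def\<close>)
  qed
  then obtain \<xi> where \<xi>: "0 < \<xi>" "\<xi> < h"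
    and e1: "\<phi> h - \<phi> 0
      = h * (pd a f ((x + \<xi> *\<^sub>R u) + h *\<^sub>R v) - pd a f ((x + \<xi> *\<^sub>R u) + 0 *\<^sub>R v))"
    by (auto simp: ac_simps)
  have "\<exists>z. 0 < z \<and> z < h \<and> pd a f ((x + \<xi> *\<^sub>R u) + h *\<^sub>R v) - pd a f ((x + \<xi> *\<^sub>R u) + 0 *\<^sub>R v)
      = (h - 0) * pd b (pd a f) ((x + \<xi> *\<^sub>R u) + z *\<^sub>R v)"
  proof (rule MVT2[OF h])
    fix t assume t: "0 \<le> t" "t \<le> h"
    have i1: "(x + \<xi> *\<^sub>R u) + t *\<^sub>R v \<in> U" using inU[of \<xi> t] t \<xi> by simp
    show "((\<lambda>t. pd a f ((x + \<xi> *\<^sub>R u) + t *\<^sub>R v)) has_real_derivative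
        pd b (pd a f) ((x + \<xi> *\<^sub>R u) + t *\<^sub>R v)) (at t)"
      unfolding v_def by (rule has_real_derivative_along_axis) (use fad i1 in \<open>auto simp: v_def\<close>)
  qed
  then obtain \<eta> where \<eta>: "0 < \<eta>" "\<eta> < h"
    and e2: "pd a f ((x + \<xi> *\<^sub>R u) + h *\<^sub>R v) - pd a f ((x + \<xi> *\<^sub>R u) + 0 *\<^sub>R v)
      = h * pd b (pd a f) ((x + \<xi> *\<^sub>R u) + \<eta> *\<^sub>R v)"
    by auto
  define p where "p = (x + \<xi> *\<^sub>R u) + \<eta> *\<^sub>R v"
  have "norm (\<xi> *\<^sub>R u + \<eta> *\<^sub>R v) \<le> norm (\<xi> *\<^sub>R u) + norm (\<eta> *\<^sub>R v)" by (rule norm_triangle_ineq)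
  also have "\<dots> \<le> 2*h" using \<xi> \<eta> nu by simp
  finally have dp: "dist p x \<le> 2*h" by (simp add: p_def dist_norm add.assoc)
  have "\<phi> h - \<phi> 0 = h\<^sup>2 * pd b (pd a f) p" using e1 e2 by (simp add: p_def power2_eq_square)
  moreover have "\<phi> h - \<phi> 0 = f (x + h *\<^sub>R u + h *\<^sub>R v) - f (x + h *\<^sub>R u) - f (x + h *\<^sub>R v) + f x"
    by (simp add: \<phi>_def ac_simps)
  ultimately show ?thesis using dp unfolding u_def v_def by metis
qed

lemma pd_commute:
  fixes f :: "pt \<Rightarrow> real"
  assumes U: "open U" and f: "Ck_on 2 U f" and x: "x \<in> U"
  shows "pd a (pd b f) x = pd b (pd a f) x"
proof (rule ccontr)
  let ?F1 = "pd b (pd a f)" and ?F2 = "pd a (pd b f)"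
  assume ne: "?F2 x \<noteq> ?F1 x"
  define e where "e = \<bar>?F1 x - ?F2 x\<bar> / 2"
  have e: "e > 0" using ne by (simp add: e_def)
  have c1: "continuous_on U ?F1" and c2: "continuous_on U ?F2" using f by (simp_all add: numeral_2_eq_2)
  obtain d1 where d1: "d1 > 0" "\<forall>y\<in>U. dist y x < d1 \<longrightarrow> dist (?F1 y) (?F1 x) < e"
    using c1 x e unfolding continuous_on_iff by blast
  obtain d2 where d2: "d2 > 0" "\<forall>y\<in>U. dist y x < d2 \<longrightarrow> dist (?F2 y) (?F2 x) < e"
    using c2 x e unfolding continuous_on_iff by blast
  obtain r where r: "r > 0" "cball x r \<subseteq> U" using open_contains_cball U x by blast
  define h where "h = min r (min d1 d2) / 3"
  have h: "h > 0" using r d1 d2 by (simp add: h_def)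
  have sub: "cball x (2*h) \<subseteq> U" using r h by (auto simp: h_def)
  obtain p where p: "dist p x \<le> 2*h"
     "f (x + h *\<^sub>R axis a 1 + h *\<^sub>R axis b 1) - f (x + h *\<^sub>R axis a 1)
       - f (x + h *\<^sub>R axis b 1) + f x = h\<^sup>2 * ?F1 p"
    using second_difference_mixed_pd[OF U f h sub] by blast
  obtain q where q: "dist q x \<le> 2*h"
     "f (x + h *\<^sub>R axis b 1 + h *\<^sub>R axis a 1) - f (x + h *\<^sub>R axis b 1)
       - f (x + h *\<^sub>R axis a 1) + f x = h\<^sup>2 * ?F2 q"
    using second_difference_mixed_pd[OF U f h sub] by blast
  have "h\<^sup>2 * ?F1 p = h\<^sup>2 * ?F2 q" using p(2) q(2) by (simp add: algebra_simps)
  then have eq: "?F1 p = ?F2 q" using h by simp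
  have pU: "p \<in> U" "q \<in> U" using p(1) q(1) sub by (auto simp: dist_commute)
  have "dist p x < d1" "dist q x < d2" using p(1) q(1) h r d1 d2 by (auto simp: h_def)
  then have "dist (?F1 p) (?F1 x) < e" "dist (?F2 q) (?F2 x) < e" using d1 d2 pU by auto
  then have "\<bar>?F1 x - ?F2 x\<bar> < 2 * e" using eq by (simp add: dist_real_def)
  then show False by (simp add: e_def)
qed

section \<open>The Levi-Civita connection of a chart\<close>

definition metric_matrix :: "metric \<Rightarrow> pt \<Rightarrow> real^3^3" where
  "metric_matrix g y = (\<chi> i j. g y i j)"

locale pseudo_riemannian_chart =
  fixes U :: "pt set" and g :: metric
  assumes pseudo_riemannian: "pseudo_riemannian U g"
begin

lemma open_U: "open U"
  using pseudo_riemannian by (simp add: pseudo_riemannian_def)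

lemma g_sym: "y \<in> U \<Longrightarrow> g y a b = g y b a"
  using pseudo_riemannian by (simp add: pseudo_riemannian_def)

lemma smooth_g: "smooth_on U (\<lambda>y. g y a b)"
  using pseudo_riemannian by (simp add: pseudo_riemannian_def)

lemma det_metric_matrix_nonzero: "y \<in> U \<Longrightarrow> det (metric_matrix g y) \<noteq> 0"
  using pseudo_riemannian by (simp add: pseudo_riemannian_def metric_matrix_def)

lemma invertible_metric_matrix: "y \<in> U \<Longrightarrow> invertible (metric_matrix g y)"
  using det_metric_matrix_nonzero invertible_det_nz by blast

lemmas chart_smooth_intros =
  smooth_const smooth_add[OF open_U] smooth_diff[OF open_U] smooth_mult[OF open_U]
  smooth_divide_const[OF open_U] smooth_sum[OF open_U] smooth_pd

lemma metric_matrix_inverse: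
  assumes "y \<in> U"
  shows "metric_matrix g y ** matrix_inv (metric_matrix g y) = mat 1"
    and "matrix_inv (metric_matrix g y) ** metric_matrix g y = mat 1"
proof -
  have "\<exists>M. metric_matrix g y ** M = mat 1 \<and> M ** metric_matrix g y = mat 1"
    using invertible_metric_matrix[OF assms] unfolding invertible_def .
  then show "metric_matrix g y ** matrix_inv (metric_matrix g y) = mat 1"
    and "matrix_inv (metric_matrix g y) ** metric_matrix g y = mat 1"
    unfolding matrix_inv_def by (metis (mono_tags, lifting) someI_ex)+
qed

lemma ginv_metric_matrix: "ginv g y a b = matrix_inv (metric_matrix g y) $ a $ b"
  by (simp add: ginv_def metric_matrix_def)

lemma g_ginv: "y \<in> U \<Longrightarrow> (\<Sum>b\<in>UNIV. g y a b * ginv g y b c) = (if a = c then 1 else 0)"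
  using arg_cong[OF metric_matrix_inverse(1), of y "\<lambda>M. M $ a $ c"]
  by (simp add: matrix_matrix_mult_def ginv_metric_matrix mat_def metric_matrix_def)

lemma ginv_g: "y \<in> U \<Longrightarrow> (\<Sum>b\<in>UNIV. ginv g y a b * g y b c) = (if a = c then 1 else 0)"
  using arg_cong[OF metric_matrix_inverse(2), of y "\<lambda>M. M $ a $ c"]
  by (simp add: matrix_matrix_mult_def ginv_metric_matrix mat_def metric_matrix_def)

lemma ginv_sym:
  assumes y: "y \<in> U"
  shows "ginv g y a b = ginv g y b a"
proof -
  let ?G = "metric_matrix g y" and ?M = "matrix_inv (metric_matrix g y)"
  have "transpose ?G = ?G"
    using g_sym[OF y] by (simp add: metric_matrix_def transpose_def vec_eq_iff)
  then have "transpose ?M ** ?G = mat 1"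
    using arg_cong[OF metric_matrix_inverse(1)[OF y], of transpose]
    by (simp add: matrix_transpose_mul)
  then have "transpose ?M = transpose ?M ** (?G ** ?M)"
    using metric_matrix_inverse(1)[OF y] by simp
  also have "\<dots> = ?M"
    using \<open>transpose ?M ** ?G = mat 1\<close> by (simp add: matrix_mul_assoc)
  finally have "transpose ?M $ a $ b = ?M $ a $ b"
    by simp
  then show ?thesis
    unfolding ginv_metric_matrix transpose_def by simp
qed

text \<open>Cramer's rule expresses the inverse metric as a quotient of polynomials in the
  metric components, whence its smoothness.\<close>

lemma ginv_cramer:
  assumes y: "y \<in> U"
  shows "ginv g y a b =
    det (\<chi> i j. if j = a then (mat 1 :: real^3^3) $ i $ b else metric_matrix g y $ i $ j)
      / det (metric_matrix g y)"
proof -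
  let ?G = "metric_matrix g y"
  define e :: "real^3" where "e = (\<chi> i. mat 1 $ i $ b)"
  have "?G *v (\<chi> c. matrix_inv ?G $ c $ b) = e"
    using metric_matrix_inverse(1)[OF y]
    by (simp add: e_def vec_eq_iff matrix_vector_mult_def matrix_matrix_mult_def)
  then have "(\<chi> c. matrix_inv ?G $ c $ b) $ a =
      det (\<chi> i j. if j = a then e $ i else ?G $ i $ j) / det ?G"
    unfolding cramer[OF det_metric_matrix_nonzero[OF y]] by simp
  then show ?thesis
    unfolding ginv_metric_matrix e_def vec_lambda_beta .
qed

lemma smooth_det3:
  "(\<And>i j. smooth_on U (\<lambda>y. F y $ i $ j)) \<Longrightarrow> smooth_on U (\<lambda>y. det (F y :: real^3^3))"
  unfolding det_3 by (intro chart_smooth_intros) auto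

lemma smooth_ginv: "smooth_on U (\<lambda>y. ginv g y a b)"
proof (rule smooth_cong[OF open_U])
  let ?A = "\<lambda>y. \<chi> i j. if j = a then (mat 1 :: real^3^3) $ i $ b else metric_matrix g y $ i $ j"
  show "det (?A y) * inverse (det (metric_matrix g y)) = ginv g y a b" if "y \<in> U" for y
    using ginv_cramer[OF that] by (simp add: divide_inverse)
  have "smooth_on U (\<lambda>y. metric_matrix g y $ i $ j)" for i j
    using smooth_g by (simp add: metric_matrix_def)
  moreover have "smooth_on U (\<lambda>y. ?A y $ i $ j)" for i j
    using calculation by (cases "j = a") (simp_all add: smooth_const)
  ultimately show "smooth_on U (\<lambda>y. det (?A y) * inverse (det (metric_matrix g y)))"
    by (intro smooth_mult[OF open_U] smooth_inverse[OF open_U] smooth_det3 det_metric_matrix_nonzero)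
qed

lemma smooth_Gam: "smooth_on U (\<lambda>y. Gam g y c a b)"
  unfolding Gam_def by (intro chart_smooth_intros smooth_ginv smooth_g) simp_all

lemma smooth_Riem: "smooth_on U (\<lambda>y. Riem g y a b d c)"
  unfolding Riem_def by (intro chart_smooth_intros smooth_Gam) simp_all

lemma smooth_Ric: "smooth_on U (\<lambda>y. Ric g y a b)"
  unfolding Ric_def by (intro chart_smooth_intros smooth_Riem) simp_all

lemma smooth_Scal: "smooth_on U (Scal g)"
  unfolding Scal_def by (intro chart_smooth_intros smooth_Ric smooth_ginv) simp_all

lemma smooth_Phi: "smooth_on U (\<lambda>y. Phi g y a b)"
  unfolding Phi_def by (intro chart_smooth_intros smooth_Ric smooth_Scal smooth_g)

lemmas differentiable_chart =
  smooth_g[THEN smooth_imp_differentiable[OF open_U]]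
  smooth_g[THEN smooth_pd, THEN smooth_imp_differentiable[OF open_U]]
  smooth_ginv[THEN smooth_imp_differentiable[OF open_U]]
  smooth_Gam[THEN smooth_imp_differentiable[OF open_U]]
  smooth_Phi[THEN smooth_imp_differentiable[OF open_U]]

lemma pd_g_sym: "y \<in> U \<Longrightarrow> pd c (\<lambda>z. g z a b) y = pd c (\<lambda>z. g z b a) y"
  by (rule pd_cong[OF open_U]) (auto intro: g_sym)

lemma Gam_sym: "y \<in> U \<Longrightarrow> Gam g y c a b = Gam g y c b a"
  unfolding Gam_def by (simp add: pd_g_sym[of y _ b a] add.commute)

lemma Gam_lower:
  assumes y: "y \<in> U"
  shows "(\<Sum>e\<in>UNIV. Gam g y e c a * g y e b)
    = (pd c (\<lambda>z. g z b a) y + pd a (\<lambda>z. g z b c) y - pd b (\<lambda>z. g z c a) y) / 2"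
proof -
  define X where "X d = pd c (\<lambda>z. g z d a) y + pd a (\<lambda>z. g z d c) y - pd d (\<lambda>z. g z c a) y" for d
  have "(\<Sum>e\<in>UNIV. Gam g y e c a * g y e b) = (\<Sum>e\<in>UNIV. \<Sum>d\<in>UNIV. ginv g y e d * X d * g y e b) / 2"
    unfolding Gam_def X_def by (simp add: sum_divide_distrib sum_distrib_right)
  also have "\<dots> = (\<Sum>d\<in>UNIV. X d * (\<Sum>e\<in>UNIV. ginv g y d e * g y e b)) / 2"
    by (subst sum.swap) (simp add: sum_distrib_left ginv_sym[OF y, of _ d for d] mult_ac)
  also have "\<dots> = X b / 2"
    by (simp add: ginv_g[OF y] if_distrib cong: if_cong)
  finally show ?thesis by (simp add: X_def)
qed

lemma metric_compatible:
  assumes y: "y \<in> U"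
  shows "pd c (\<lambda>z. g z a b) y = (\<Sum>e\<in>UNIV. Gam g y e c a * g y e b) + (\<Sum>e\<in>UNIV. Gam g y e c b * g y e a)"
  unfolding Gam_lower[OF y]
  using pd_g_sym[OF y, of c b a] pd_g_sym[OF y, of a b c] pd_g_sym[OF y, of b c a]
  by (simp add: field_simps)

lemma pd_ginv:
  assumes y: "y \<in> U"
  shows "pd a (\<lambda>z. ginv g z c f) y =
    - (\<Sum>e\<in>UNIV. \<Sum>d\<in>UNIV. ginv g y c d * pd a (\<lambda>z. g z d e) y * ginv g y e f)"
proof -
  have "pd a (\<lambda>z. \<Sum>d\<in>UNIV. ginv g z c d * g z d e) y = pd a (\<lambda>z. if c = e then 1 else 0) y" for e
    by (rule pd_cong[OF open_U y]) (simp add: ginv_g)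
  then have E: "(\<Sum>d\<in>UNIV. pd a (\<lambda>z. ginv g z c d) y * g y d e)
      = - (\<Sum>d\<in>UNIV. ginv g y c d * pd a (\<lambda>z. g z d e) y)" for e
    using differentiable_chart[OF y]
    by (simp add: pd_sum pd_mult differentiable_mult sum.distrib eq_neg_iff_add_eq_0 add.commute)
  have "pd a (\<lambda>z. ginv g z c f) y
      = (\<Sum>d\<in>UNIV. pd a (\<lambda>z. ginv g z c d) y * (\<Sum>e\<in>UNIV. g y d e * ginv g y e f))"
    by (simp add: g_ginv[OF y] if_distrib cong: if_cong)
  also have "\<dots> = (\<Sum>d\<in>UNIV. \<Sum>e\<in>UNIV. pd a (\<lambda>z. ginv g z c d) y * g y d e * ginv g y e f)"
    by (simp add: sum_distrib_left mult.assoc)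
  also have "\<dots> = (\<Sum>e\<in>UNIV. (\<Sum>d\<in>UNIV. pd a (\<lambda>z. ginv g z c d) y * g y d e) * ginv g y e f)"
    by (subst sum.swap) (simp add: sum_distrib_right)
  also have "\<dots> = - (\<Sum>e\<in>UNIV. \<Sum>d\<in>UNIV. ginv g y c d * pd a (\<lambda>z. g z d e) y * ginv g y e f)"
    by (simp add: E sum_distrib_right sum_negf)
  finally show ?thesis .
qed

lemma trace_Gam:
  assumes z: "z \<in> U"
  shows "(\<Sum>c\<in>UNIV. Gam g z c c b) = (\<Sum>c\<in>UNIV. \<Sum>d\<in>UNIV. ginv g z c d * pd b (\<lambda>w. g w d c) z) / 2"
proof -
  have "(\<Sum>c\<in>UNIV. \<Sum>d\<in>UNIV. ginv g z c d * pd d (\<lambda>w. g w c b) z)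
      = (\<Sum>c\<in>UNIV. \<Sum>d\<in>UNIV. ginv g z c d * pd c (\<lambda>w. g w d b) z)"
    by (subst sum.swap) (simp add: ginv_sym[OF z])
  then show ?thesis
    unfolding Gam_def
    by (simp add: sum_divide_distrib[symmetric] sum.distrib sum_subtractf algebra_simps)
qed

lemma pd_trace_Gam:
  assumes y: "y \<in> U"
  shows "pd a (\<lambda>z. \<Sum>c\<in>UNIV. Gam g z c c b) y =
   (- (\<Sum>c\<in>UNIV. \<Sum>d\<in>UNIV. (\<Sum>e\<in>UNIV. \<Sum>f\<in>UNIV. ginv g y c f * pd a (\<lambda>w. g w f e) y * ginv g y e d)
        * pd b (\<lambda>w. g w d c) y)
    + (\<Sum>c\<in>UNIV. \<Sum>d\<in>UNIV. ginv g y c d * pd a (pd b (\<lambda>w. g w d c)) y)) / 2"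
proof -
  have "pd a (\<lambda>z. \<Sum>c\<in>UNIV. Gam g z c c b) y
     = pd a (\<lambda>z. (\<Sum>c\<in>UNIV. \<Sum>d\<in>UNIV. ginv g z c d * pd b (\<lambda>w. g w d c) z) / 2) y"
    by (rule pd_cong[OF open_U y]) (simp add: trace_Gam)
  also have "\<dots> = (\<Sum>c\<in>UNIV. \<Sum>d\<in>UNIV. ginv g y c d * pd a (pd b (\<lambda>w. g w d c)) y
       + pd a (\<lambda>z. ginv g z c d) y * pd b (\<lambda>w. g w d c) y) / 2"
    using differentiable_chart[OF y]
    by (simp add: pd_divide_const pd_mult pd_sum differentiable_mult differentiable_sum)
  finally show ?thesis
    by (simp add: pd_ginv[OF y] sum_subtractf)
qed

lemma pd_trace_Gam_sym:
  assumes y: "y \<in> U"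
  shows "pd a (\<lambda>z. \<Sum>c\<in>UNIV. Gam g z c c b) y = pd b (\<lambda>z. \<Sum>c\<in>UNIV. Gam g z c c a) y"
proof -
  have "pd a (pd b (\<lambda>w. g w d c)) y = pd b (pd a (\<lambda>w. g w d c)) y" for c d
    using pd_commute[OF open_U _ y] smooth_g unfolding smooth_on_def by blast
  then show ?thesis
    unfolding pd_trace_Gam[OF y, of a b] pd_trace_Gam[OF y, of b a]
    using trace_product_swap[of "ginv g y" "\<lambda>f e. pd a (\<lambda>w. g w f e) y" "\<lambda>d c. pd b (\<lambda>w. g w d c) y"]
    by simp
qed

lemma Ric_sym:
  assumes y: "y \<in> U"
  shows "Ric g y a b = Ric g y b a"
proof -
  have Ric: "Ric g y a b = pd a (\<lambda>z. \<Sum>c\<in>UNIV. Gam g z c c b) y - (\<Sum>c\<in>UNIV. pd c (\<lambda>z. Gam g z c a b) y)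
     + (\<Sum>c\<in>UNIV. \<Sum>e\<in>UNIV. Gam g y c a e * Gam g y e c b)
     - (\<Sum>c\<in>UNIV. \<Sum>e\<in>UNIV. Gam g y c c e * Gam g y e a b)" for a b
    unfolding Ric_def Riem_def using differentiable_chart[OF y]
    by (simp add: pd_sum sum.distrib sum_subtractf)
  have "(\<Sum>c\<in>UNIV. pd c (\<lambda>z. Gam g z c a b) y) = (\<Sum>c\<in>UNIV. pd c (\<lambda>z. Gam g z c b a) y)"
    by (intro sum.cong refl pd_cong[OF open_U y]) (rule Gam_sym)
  moreover have "(\<Sum>c\<in>UNIV. \<Sum>e\<in>UNIV. Gam g y c a e * Gam g y e c b)
      = (\<Sum>c\<in>UNIV. \<Sum>e\<in>UNIV. Gam g y c b e * Gam g y e c a)"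
    by (subst sum.swap) (simp add: Gam_sym[OF y] mult.commute)
  ultimately show ?thesis
    unfolding Ric[of a b] Ric[of b a] pd_trace_Gam_sym[OF y, of a b] by (simp add: Gam_sym[OF y])
qed

lemma Phi_sym: "y \<in> U \<Longrightarrow> Phi g y a b = Phi g y b a"
  unfolding Phi_def using Ric_sym g_sym by simp

lemma Phi_trace_free:
  assumes y: "y \<in> U"
  shows "(\<Sum>a\<in>UNIV. \<Sum>b\<in>UNIV. ginv g y a b * Phi g y a b) = 0"
proof -
  have "(\<Sum>a\<in>UNIV. \<Sum>b\<in>UNIV. ginv g y a b * g y a b) = (\<Sum>a\<in>UNIV. \<Sum>b\<in>UNIV. ginv g y a b * g y b a)"
    using g_sym[OF y] by simp
  also have "\<dots> = 3"
    by (simp add: ginv_g[OF y])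
  finally have trace_g: "(\<Sum>a\<in>UNIV. \<Sum>b\<in>UNIV. ginv g y a b * g y a b) = 3" .
  have "(\<Sum>a\<in>UNIV. \<Sum>b\<in>UNIV. ginv g y a b * Phi g y a b)
     = (\<Sum>a\<in>UNIV. \<Sum>b\<in>UNIV. ginv g y a b * Ric g y a b - Scal g y / 3 * (ginv g y a b * g y a b))"
    unfolding Phi_def by (simp add: algebra_simps)
  also have "\<dots> = Scal g y - Scal g y / 3 * (\<Sum>a\<in>UNIV. \<Sum>b\<in>UNIV. ginv g y a b * g y a b)"
    unfolding Scal_def by (simp add: sum_subtractf sum_distrib_left)
  finally show ?thesis
    using trace_g by simp
qed

end

section \<open>Null frames\<close>

definition frame_inverse_metric :: "(3 \<Rightarrow> complex) \<Rightarrow> (3 \<Rightarrow> complex) \<Rightarrow> (3 \<Rightarrow> complex) \<Rightarrow> complex^3^3" where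
  "frame_inverse_metric k l n = (\<chi> a b. k a * l b + l a * k b - 2 * n a * n b)"

lemma null_frame_inverse_metric:
  assumes sym: "\<And>a b. g y a b = g y b a" and frame: "null_frame g y k l n"
  shows "frame_inverse_metric k l n ** (\<chi> a b. complex_of_real (g y a b)) = mat 1"
proof -
  \<comment> \<open>With \<open>F\<close> the matrix of columns \<open>k, l, n\<close>, the frame conditions say \<open>F\<^sup>T G F N = 1\<close>,
    where \<open>N\<close> inverts the Gram matrix of the frame; hence \<open>F N F\<^sup>T\<close> inverts \<open>G\<close>.\<close>
  define col where "col j = (if j = (1::3) then k else if j = 2 then l else n)" for j
  define F :: "complex^3^3" where "F = (\<chi> i j. col j i)"
  define G :: "complex^3^3" where "G = (\<chi> a b. complex_of_real (g y a b))"
  define N :: "complex^3^3" where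
    "N = (\<chi> i j. if (i = 1 \<and> j = 2) \<or> (i = 2 \<and> j = 1) then 1 else if i = 3 \<and> j = 3 then -2 else 0)"
  have gram: "(transpose F ** G ** F) $ i $ j = gC g y (col i) (col j)" for i j
  proof -
    have "(transpose F ** G ** F) $ i $ j = (\<Sum>m\<in>UNIV. \<Sum>a\<in>UNIV. G $ a $ m * col i a * col j m)"
      by (simp add: matrix_matrix_mult_def transpose_def F_def sum_distrib_left sum_distrib_right mult_ac)
    then show ?thesis
      unfolding gC_def G_def by (subst sum.swap) simp
  qed
  have "(transpose F ** G ** F ** N) $ i $ j = mat 1 $ i $ j" for i j
  proof -
    have "(transpose F ** G ** F ** N) $ i $ j = (\<Sum>m\<in>UNIV. gC g y (col i) (col m) * N $ m $ j)"
      by (simp add: matrix_matrix_mult_def[of "transpose F ** G ** F"] gram)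
    also have "\<dots> = mat 1 $ i $ j"
      using exhaust_3[of i] exhaust_3[of j] frame gC_sym[of g y, OF sym]
      by (auto simp: sum_3 N_def col_def mat_def null_frame_def)
    finally show ?thesis .
  qed
  then have "transpose F ** (G ** F ** N) = mat 1"
    by (simp add: vec_eq_iff matrix_mul_assoc)
  then have "G ** (F ** N ** transpose F) = mat 1"
    using matrix_left_right_inverse by (metis matrix_mul_assoc)
  then have "(F ** N ** transpose F) ** G = mat 1"
    using matrix_left_right_inverse by blast
  moreover have "F ** N ** transpose F = frame_inverse_metric k l n"
    by (simp add: vec_eq_iff matrix_matrix_mult_def transpose_def F_def N_def col_def sum_3
        frame_inverse_metric_def algebra_simps)
  ultimately show ?thesis by (simp add: G_def)
qed

lemma null_frame_expansion:
  assumes sym: "\<And>a b. g y a b = g y b a" and frame: "null_frame g y k l n"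
  shows "v = (\<lambda>i. gC g y v l * k i + gC g y v k * l i + (-2 * gC g y v n) * n i)"
proof
  fix i
  let ?G = "\<chi> a b. complex_of_real (g y a b)"
  have "v i = ((frame_inverse_metric k l n ** ?G) *v (\<chi> c. v c)) $ i"
    using null_frame_inverse_metric[OF sym frame] by simp
  also have "\<dots> = (frame_inverse_metric k l n *v (?G *v (\<chi> c. v c))) $ i"
    by (simp add: matrix_vector_mul_assoc)
  also have "\<dots> = (\<Sum>b\<in>UNIV. (k i * l b + l i * k b - 2 * n i * n b) * (\<Sum>c\<in>UNIV. ?G $ b $ c * v c))"
    by (simp add: matrix_vector_mult_def frame_inverse_metric_def)
  also have "\<dots> = gC g y l v * k i + gC g y k v * l i - 2 * gC g y n v * n i"
    by (simp add: gC_def algebra_simps sum.distrib sum_subtractf sum_distrib_left)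
  finally show "v i = gC g y v l * k i + gC g y v k * l i + (-2 * gC g y v n) * n i"
    using gC_sym[of g y, OF sym] by (simp add: algebra_simps)
qed

context pseudo_riemannian_chart
begin

lemma ginv_null_frame:
  assumes y: "y \<in> U" and frame: "null_frame g y k l n"
  shows "complex_of_real (ginv g y a b) = k a * l b + l a * k b - 2 * n a * n b"
proof -
  let ?H = "frame_inverse_metric k l n"
  let ?G = "\<chi> a b. complex_of_real (g y a b)"
  let ?Gi = "\<chi> a b. complex_of_real (ginv g y a b)"
  have "?G ** ?Gi = mat 1"
    by (simp add: vec_eq_iff matrix_matrix_mult_def mat_def g_ginv[OF y] flip: of_real_mult of_real_sum)
  then have "?H = (?H ** ?G) ** ?Gi"
    by (simp add: matrix_mul_assoc[symmetric])
  then have "?H = ?Gi"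
    using null_frame_inverse_metric[OF g_sym[OF y] frame] by simp
  then show ?thesis
    by (simp add: frame_inverse_metric_def vec_eq_iff)
qed

lemma PhiC_sym: "y \<in> U \<Longrightarrow> PhiC g y u v = PhiC g y v u"
  unfolding PhiC_bil by (rule bil_sym) (simp add: Phi_sym)

lemma mult3_PhiC_zero:
  assumes y: "y \<in> U" and "mult3 g y K"
  shows "PhiC g y K v = 0"
proof -
  obtain l n where frame: "null_frame g y K l n"
    and "PhiC g y K K = 0" "PhiC g y K n = 0" "PhiC g y K l = 0"
    using assms(2) unfolding mult3_def by auto
  moreover have "PhiC g y K v = gC g y v l * PhiC g y K K + gC g y v K * PhiC g y K l
      + (-2 * gC g y v n) * PhiC g y K n"
    using arg_cong[OF null_frame_expansion[OF g_sym[OF y] frame, of v], of "PhiC g y K"]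
    by (simp only: PhiC_bil bil_linear_right)
  ultimately show ?thesis
    by simp
qed

lemma null_frame_PhiC_nn:
  assumes y: "y \<in> U" and frame: "null_frame g y k l n" and Phi_k: "\<And>v. PhiC g y k v = 0"
  shows "PhiC g y n n = 0"
proof -
  have "0 = complex_of_real (\<Sum>a\<in>UNIV. \<Sum>b\<in>UNIV. ginv g y a b * Phi g y a b)"
    using Phi_trace_free[OF y] by simp
  also have "\<dots> = PhiC g y k l + PhiC g y l k - 2 * PhiC g y n n"
    by (simp add: ginv_null_frame[OF y frame] PhiC_def sum_3 algebra_simps)
  finally show ?thesis
    using Phi_k[of l] PhiC_sym[OF y, of l k] by simp
qed

lemma null_frame_PhiC_orthogonal:
  assumes y: "y \<in> U" and frame: "null_frame g y k l n" and Phi_k: "\<And>v. PhiC g y k v = 0"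
    and w: "gC g y w k = 0"
  shows "PhiC g y u w = (-2 * gC g y w n) * PhiC g y u n"
proof -
  have "PhiC g y u w = gC g y w l * PhiC g y u k + gC g y w k * PhiC g y u l
      + (-2 * gC g y w n) * PhiC g y u n"
    using arg_cong[OF null_frame_expansion[OF g_sym[OF y] frame, of w], of "PhiC g y u"]
    by (simp only: PhiC_bil bil_linear_right)
  then show ?thesis
    using Phi_k[of u] PhiC_sym[OF y, of u k] w by simp
qed

end

section \<open>Covariant derivatives of complex vector fields\<close>

definition nabla_comp :: "metric \<Rightarrow> (pt \<Rightarrow> 3 \<Rightarrow> complex) \<Rightarrow> pt \<Rightarrow> 3 \<Rightarrow> 3 \<Rightarrow> complex" where
  "nabla_comp g K x b c = pd b (\<lambda>z. K z c) x + (\<Sum>a\<in>UNIV. of_real (Gam g x c b a) * K x a)"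

definition nabla_along :: "metric \<Rightarrow> (pt \<Rightarrow> 3 \<Rightarrow> complex) \<Rightarrow> pt \<Rightarrow> (3 \<Rightarrow> complex) \<Rightarrow> 3 \<Rightarrow> complex" where
  "nabla_along g K x v = (\<lambda>c. \<Sum>b\<in>UNIV. v b * nabla_comp g K x b c)"

lemma nablaC_eq_nabla_along: "nablaC g V K x = nabla_along g K x (V x)"
  by (rule ext) (simp add: nablaC_def nabla_along_def nabla_comp_def sum.distrib sum_distrib_left algebra_simps)

lemma nabla_along_linear:
  "nabla_along g K x (\<lambda>i. a * u i + b * w i + c * z i)
    = (\<lambda>j. a * nabla_along g K x u j + b * nabla_along g K x w j + c * nabla_along g K x z j)"
  by (rule ext) (simp add: nabla_along_def algebra_simps sum.distrib sum_distrib_left)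

lemma gC_nabla_along:
  "gC g x (nabla_along g K x v) w = (\<Sum>b\<in>UNIV. v b * gC g x (nabla_comp g K x b) w)"
  "gC g x w (nabla_along g K x v) = (\<Sum>b\<in>UNIV. v b * gC g x w (nabla_comp g K x b))"
  by (simp_all add: gC_def nabla_along_def sum_3 algebra_simps)

context pseudo_riemannian_chart
begin

lemma pd_gC:
  assumes x: "x \<in> U"
    and Y: "\<And>a. (\<lambda>z. Y z a) differentiable (at x)" and K: "\<And>a. (\<lambda>z. K z a) differentiable (at x)"
  shows "pd b (\<lambda>z. gC g z (Y z) (K z)) x
    = gC g x (nabla_comp g Y x b) (K x) + gC g x (Y x) (nabla_comp g K x b)"
proof -
  let ?G = "\<lambda>a c. complex_of_real (g x a c)"
  let ?P = "\<lambda>e a. complex_of_real (Gam g x e b a)"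
  have "(\<lambda>z. complex_of_real (g z a c)) differentiable (at x)" for a c
    using differentiable_chart[OF x] by (simp add: differentiable_of_real)
  then have "pd b (\<lambda>z. gC g z (Y z) (K z)) x = (\<Sum>a\<in>UNIV. \<Sum>c\<in>UNIV.
      of_real (pd b (\<lambda>z. g z a c) x) * Y x a * K x c
      + ?G a c * pd b (\<lambda>z. Y z a) x * K x c + ?G a c * Y x a * pd b (\<lambda>z. K z c) x)"
    unfolding gC_def using Y K differentiable_chart[OF x]
    by (simp add: pd_sum pd_mult pd_of_real differentiable_sum differentiable_mult algebra_simps)
  also have "\<dots> = (\<Sum>a\<in>UNIV. \<Sum>c\<in>UNIV. (\<Sum>e\<in>UNIV. ?P e a * ?G e c) * Y x a * K x c)
      + (\<Sum>a\<in>UNIV. \<Sum>c\<in>UNIV. (\<Sum>e\<in>UNIV. ?P e c * ?G e a) * Y x a * K x c)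
      + (\<Sum>a\<in>UNIV. \<Sum>c\<in>UNIV. ?G a c * pd b (\<lambda>z. Y z a) x * K x c)
      + (\<Sum>a\<in>UNIV. \<Sum>c\<in>UNIV. ?G a c * Y x a * pd b (\<lambda>z. K z c) x)"
    by (simp add: metric_compatible[OF x] sum.distrib distrib_right)
  also have "\<dots> = gC g x (nabla_comp g Y x b) (K x) + gC g x (Y x) (nabla_comp g K x b)"
  proof -
    have "gC g x (nabla_comp g Y x b) (K x)
        = (\<Sum>a\<in>UNIV. \<Sum>c\<in>UNIV. ?G a c * pd b (\<lambda>z. Y z a) x * K x c)
        + (\<Sum>a\<in>UNIV. \<Sum>c\<in>UNIV. ?G a c * (\<Sum>e\<in>UNIV. ?P a e * Y x e) * K x c)"
      by (simp add: gC_def nabla_comp_def distrib_left distrib_right sum.distrib)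
    moreover have "gC g x (Y x) (nabla_comp g K x b)
        = (\<Sum>a\<in>UNIV. \<Sum>c\<in>UNIV. ?G a c * Y x a * pd b (\<lambda>z. K z c) x)
        + (\<Sum>a\<in>UNIV. \<Sum>c\<in>UNIV. ?G a c * Y x a * (\<Sum>e\<in>UNIV. ?P c e * K x e))"
      by (simp add: gC_def nabla_comp_def distrib_left sum.distrib)
    ultimately show ?thesis
      unfolding sum_contract_swap sum_contract_swap_sym[of ?G, OF g_sym[OF x, THEN arg_cong]]
      by (simp only: add_ac)
  qed
  finally show ?thesis .
qed

lemma gC_nablaC_Leibniz:
  assumes x: "x \<in> U"
    and Y: "\<And>a. (\<lambda>z. Y z a) differentiable (at x)" and K: "\<And>a. (\<lambda>z. K z a) differentiable (at x)"
    and orth: "\<And>z. z \<in> U \<Longrightarrow> gC g z (Y z) (K z) = 0"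
  shows "gC g x (nablaC g X Y x) (K x) + gC g x (Y x) (nablaC g X K x) = 0"
proof -
  have "pd b (\<lambda>z. gC g z (Y z) (K z)) x = 0" for b
    by (rule pd_eq_0[OF open_U x orth])
  then show ?thesis
    unfolding nablaC_eq_nabla_along gC_nabla_along
    by (simp add: pd_gC[OF x Y K, symmetric] sum.distrib[symmetric] distrib_left[symmetric])
qed

end

section \<open>The co-geodetic property\<close>

locale cotton_mult3_generator = pseudo_riemannian_chart +
  fixes k :: "pt \<Rightarrow> 3 \<Rightarrow> complex"
  assumes smooth_k: "smooth_field U k"
    and null_k: "\<And>x. x \<in> U \<Longrightarrow> gC g x (k x) (k x) = 0"
    and mult3_k: "\<And>x. x \<in> U \<Longrightarrow> mult3 g x (k x)"
    and Cotton_k: "\<And>x b c. x \<in> U \<Longrightarrow> (\<Sum>a\<in>UNIV. k x a * of_real (Cotton g x a b c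
            - (g x a b * pd c (Sc g) x - g x a c * pd b (Sc g) x))) = 0"
begin

lemma differentiable_k: "x \<in> U \<Longrightarrow> (\<lambda>y. k y a) differentiable (at x)"
  using smooth_k smooth_imp_differentiable[OF open_U] unfolding smooth_field_def by blast

lemma PhiC_k: "x \<in> U \<Longrightarrow> PhiC g x (k x) v = 0"
  using mult3_PhiC_zero mult3_k by blast

lemma Phi_contract_k:
  assumes x: "x \<in> U"
  shows "(\<Sum>a\<in>UNIV. of_real (Phi g x c a) * k x a) = 0"
proof -
  have "PhiC g x (k x) (\<lambda>i. if i = c then 1 else 0) = 0"
    by (rule PhiC_k[OF x])
  then show ?thesis
    by (simp add: PhiC_def Phi_sym[OF x, of _ c] if_distrib cong: if_cong)
qed

lemma gC_k_nabla_k: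
  assumes x: "x \<in> U"
  shows "gC g x (k x) (nabla_along g k x v) = 0"
proof -
  have "gC g x (nablaC g (\<lambda>z. v) k x) (k x) + gC g x (k x) (nablaC g (\<lambda>z. v) k x) = 0"
    by (rule gC_nablaC_Leibniz[OF x]) (use differentiable_k null_k x in auto)
  then show ?thesis
    using gC_sym[of g x, OF g_sym[OF x]] by (simp add: nablaC_eq_nabla_along)
qed

lemma k_contract_nabla_Phi:
  assumes x: "x \<in> U"
  shows "(\<Sum>a\<in>UNIV. k x a * of_real (nabla2 g (Phi g) x b c a))
    = - (\<Sum>e\<in>UNIV. of_real (Phi g x c e) * nabla_comp g k x b e)"
proof -
  let ?Phi = "\<lambda>c a. complex_of_real (Phi g x c a)"
  let ?dPhi = "\<lambda>c a. complex_of_real (pd b (\<lambda>y. Phi g y c a) x)"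
  let ?\<Gamma> = "\<lambda>e a. complex_of_real (Gam g x e b a)"
  have "pd b (\<lambda>z. \<Sum>a\<in>UNIV. of_real (Phi g z c a) * k z a) x = 0"
    by (rule pd_eq_0[OF open_U x Phi_contract_k])
  moreover have "(\<lambda>z. complex_of_real (Phi g z c a)) differentiable (at x)" for a
    using differentiable_chart[OF x] by (simp add: differentiable_of_real)
  ultimately have dPhi_k:
      "(\<Sum>a\<in>UNIV. ?dPhi c a * k x a) = - (\<Sum>a\<in>UNIV. ?Phi c a * pd b (\<lambda>z. k z a) x)"
    using differentiable_k[OF x] differentiable_chart[OF x]
    by (simp add: pd_sum pd_mult pd_of_real sum.distrib add_eq_0_iff add.commute)
  have "(\<Sum>a\<in>UNIV. k x a * of_real (nabla2 g (Phi g) x b c a))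
      = (\<Sum>a\<in>UNIV. ?dPhi c a * k x a)
        - (\<Sum>e\<in>UNIV. of_real (Gam g x e b c) * (\<Sum>a\<in>UNIV. ?Phi e a * k x a))
        - (\<Sum>e\<in>UNIV. ?Phi c e * (\<Sum>a\<in>UNIV. ?\<Gamma> e a * k x a))"
    by (simp add: nabla2_def sum_3 algebra_simps)
  also have "\<dots> = - (\<Sum>e\<in>UNIV. ?Phi c e * nabla_comp g k x b e)"
    by (simp add: dPhi_k Phi_contract_k[OF x] nabla_comp_def distrib_left sum.distrib)
  finally show ?thesis .
qed

lemma Phi_nabla_k_sym:
  assumes x: "x \<in> U"
  shows "PhiC g x u (nabla_along g k x v) = PhiC g x v (nabla_along g k x u)"
proof -
  let ?T = "\<lambda>c b. \<Sum>e\<in>UNIV. of_real (Phi g x c e) * nabla_comp g k x b e"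
  have Cotton_eq: "(\<Sum>a\<in>UNIV. k x a * of_real (Cotton g x a b c
        - (g x a b * pd c (Sc g) x - g x a c * pd b (Sc g) x)))
     = (\<Sum>a\<in>UNIV. k x a * of_real (nabla2 g (Phi g) x c b a))
       - (\<Sum>a\<in>UNIV. k x a * of_real (nabla2 g (Phi g) x b c a))"
    for b c by (simp add: Cotton_def algebra_simps sum.distrib sum_subtractf)
  have T: "?T c b = ?T b c" for b c
    using Cotton_k[OF x, of b c] unfolding Cotton_eq k_contract_nabla_Phi[OF x] by simp
  have "PhiC g x u (nabla_along g k x v) = (\<Sum>c\<in>UNIV. \<Sum>b\<in>UNIV. u c * v b * ?T c b)"
    by (simp add: PhiC_def nabla_along_def sum_3 algebra_simps)
  also have "\<dots> = (\<Sum>b\<in>UNIV. \<Sum>c\<in>UNIV. u c * v b * ?T c b)"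
    by (rule sum.swap)
  also have "\<dots> = (\<Sum>b\<in>UNIV. \<Sum>c\<in>UNIV. v b * u c * ?T b c)"
    using T by (simp add: mult_ac)
  also have "\<dots> = PhiC g x v (nabla_along g k x u)"
    by (simp add: PhiC_def nabla_along_def sum_3 algebra_simps)
  finally show ?thesis .
qed

lemma gC_nabla_k_orthogonal:
  assumes x: "x \<in> U" and X: "gC g x X (k x) = 0" and Y: "gC g x Y (k x) = 0"
  shows "gC g x Y (nabla_along g k x X) = 0"
proof -
  let ?N = "nabla_along g k x"
  obtain l n where frame: "null_frame g x (k x) l n" and Phi_ln: "PhiC g x l n \<noteq> 0"
    using mult3_k[OF x] unfolding mult3_def by auto
  have sym: "gC g x u w = gC g x w u" for u w
    using gC_sym[of g x, OF g_sym[OF x]] .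
  have Phi_nn: "PhiC g x n n = 0"
    by (rule null_frame_PhiC_nn[OF x frame PhiC_k[OF x]])
  have Phi_N: "PhiC g x u (?N v) = (-2 * gC g x (?N v) n) * PhiC g x u n" for u v
    using null_frame_PhiC_orthogonal[OF x frame PhiC_k[OF x]] gC_k_nabla_k[OF x] sym by metis
  have Nk_n: "gC g x (?N (k x)) n = 0"
    using Phi_nabla_k_sym[OF x, of l "k x"] Phi_N[of l "k x"] PhiC_k[OF x] Phi_ln by simp
  have Nn_n: "gC g x (?N n) n = 0"
    using Phi_nabla_k_sym[OF x, of l n] Phi_N[of l n] Phi_N[of n l] Phi_nn Phi_ln by simp
  have expand_orth: "u = (\<lambda>i. gC g x u l * k x i + 0 * l i + (-2 * gC g x u n) * n i)"
    if "gC g x u (k x) = 0" for u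
    using null_frame_expansion[OF g_sym[OF x] frame, of u] that by simp
  have "gC g x n (?N X) = 0"
    using arg_cong[OF expand_orth[OF X], of "\<lambda>u. gC g x n (?N u)"] Nk_n Nn_n sym
    by (simp only: nabla_along_linear gC_bil bil_linear_right) simp
  then show ?thesis
    using arg_cong[OF expand_orth[OF Y], of "\<lambda>u. gC g x u (?N X)"] gC_k_nabla_k[OF x]
    by (simp only: gC_bil bil_linear_left) simp
qed

lemma gC_nablaC_k:
  assumes x: "x \<in> U" and "smooth_field U Y"
    and Y: "\<And>z. z \<in> U \<Longrightarrow> gC g z (Y z) (k z) = 0" and X: "gC g x (X x) (k x) = 0"
  shows "gC g x (nablaC g X Y x) (k x) = 0"
proof -
  have "(\<lambda>z. Y z a) differentiable (at x)" for a
    using assms(2) smooth_imp_differentiable[OF open_U _ x] unfolding smooth_field_def by blast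
  then have "gC g x (nablaC g X Y x) (k x) = - gC g x (Y x) (nablaC g X k x)"
    using gC_nablaC_Leibniz[OF x _ differentiable_k[OF x] Y] by (simp add: eq_neg_iff_add_eq_0)
  also have "\<dots> = 0"
    by (simp add: nablaC_eq_nabla_along gC_nabla_k_orthogonal x X Y)
  finally show ?thesis .
qed

end

theorem mainTheorem5:
  fixes U :: "pt set" and g :: metric and N :: "pt \<Rightarrow> (3 \<Rightarrow> complex) set"
    and k :: "pt \<Rightarrow> 3 \<Rightarrow> complex"
  assumes "pseudo_riemannian U g"
    and "generator U g N k"
    and "\<forall>x\<in>U. mult3 g x (k x)"
    and "\<forall>x\<in>U. \<forall>b c. (\<Sum>a\<in>UNIV. k x a * of_real (Cotton g x a b c
            - (g x a b * pd c (Sc g) x - g x a c * pd b (Sc g) x))) = 0"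
    and "\<forall>x\<in>U. \<forall>c. (\<Sum>a\<in>UNIV. \<Sum>b\<in>UNIV. k x a * k x b * of_real (Cotton g x a b c)) = 0"
    and "\<forall>x\<in>U. (\<Sum>a\<in>UNIV. k x a * of_real (pd a (Sc g) x)) = 0"
  shows "co_geodetic U g N"
proof -
  interpret cotton_mult3_generator U g k
    using assms(1-4) unfolding generator_def by unfold_locales auto
  have N: "N x = {(\<lambda>i. c * k x i) | c. True}" if "x \<in> U" for x
    using assms(2) that unfolding generator_def by blast
  have k_perp: "gC g x v (k x) = 0" if "x \<in> U" "v \<in> perp g N x" for x v
    using that N[of x] unfolding perp_def by force
  show ?thesis
    unfolding co_geodetic_def
  proof (intro allI impI ballI)
    fix X Y Z x
    assume fields: "smooth_field U X \<and> smooth_field U Y \<and> smooth_field U Z \<and>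
        (\<forall>x\<in>U. X x \<in> perp g N x \<and> Y x \<in> perp g N x \<and> Z x \<in> N x)" and x: "x \<in> U"
    obtain c where "Z x = (\<lambda>i. c * k x i)"
      using fields N[OF x] x by blast
    moreover have "gC g x (nablaC g X Y x) (k x) = 0"
      using fields x by (intro gC_nablaC_k k_perp) auto
    ultimately show "gC g x (nablaC g X Y x) (Z x) = 0"
      by (simp add: gC_bil bil_scale_right)
  qed
qed

end
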